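(* Let $\psi$ be an injective map from the positive integers to the positive integers and let $A=\{\psi(n): n\ge 1\}$. Let $\alpha$ be a positive even integer. For every nonnegative integer $n$, \[ \bar{p}^{A}(n)=\sum_{(N_0,N_1,N_2,\dots)}\ \prod_{j\ge0}\bar{p}^{A}_{\alpha}(N_j), \] where the sum runs over all sequences $(N_0,N_1,\dots)$ of nonnegative integers with $n=\sum_{i\ge0}(\alpha+1)^{i}N_i$.
   Context: For a set $A$ of positive integers: $\bar{p}^{A}(n)=E^{A}(n)-O^{A}(n)$, where $E^{A}(n)$ (resp. $O^{A}(n)$) is the number of partitions of $n$ into parts from $A$ (no restriction on multiplicities) with an even (resp. odd) number of parts, and $\bar{p}^{A}(0)=1$. For a positive integer $\alpha$, $\bar{p}^{A}_{\alpha}(n)=E^{A}_{\alpha}(n)-O^{A}_{\alpha}(n)$, where $E^{A}_{\alpha}(n)$ (resp. $O^{A}_{\alpha}(n)$) is the number of partitions of $n$ into parts from $A$ in which each part occurs at most $\alpha$ times and having an even (resp. odd) number of parts, and $\bar{p}^{A}_{\alpha}(0)=1$. *)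

theory Defs
  imports Main "HOL-Library.Multiset" "HOL-Library.Groups_Big_Fun"
begin

definition E_part :: "nat set \<Rightarrow> nat \<Rightarrow> nat" where
  "E_part A n = card {M :: nat multiset. set_mset M \<subseteq> A \<and> sum_mset M = n \<and> even (size M)}"

definition O_part :: "nat set \<Rightarrow> nat \<Rightarrow> nat" where
  "O_part A n = card {M :: nat multiset. set_mset M \<subseteq> A \<and> sum_mset M = n \<and> odd (size M)}"

definition pbar :: "nat set \<Rightarrow> nat \<Rightarrow> int" where
  "pbar A n = (if n = 0 then 1 else int (E_part A n) - int (O_part A n))"

definition E_part_bd :: "nat set \<Rightarrow> nat \<Rightarrow> nat \<Rightarrow> nat" where
  "E_part_bd A \<alpha> n = card {M :: nat multiset. set_mset M \<subseteq> A \<and> sum_mset M = n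
      \<and> (\<forall>k. count M k \<le> \<alpha>) \<and> even (size M)}"

definition O_part_bd :: "nat set \<Rightarrow> nat \<Rightarrow> nat \<Rightarrow> nat" where
  "O_part_bd A \<alpha> n = card {M :: nat multiset. set_mset M \<subseteq> A \<and> sum_mset M = n
      \<and> (\<forall>k. count M k \<le> \<alpha>) \<and> odd (size M)}"

definition pbar_bd :: "nat set \<Rightarrow> nat \<Rightarrow> nat \<Rightarrow> int" where
  "pbar_bd A \<alpha> n = (if n = 0 then 1 else int (E_part_bd A \<alpha> n) - int (O_part_bd A \<alpha> n))"

end

(* Write b = \<alpha> + 1 and expand every multiplicity of a partition M of n in base b.  The j-th
   digits form a partition M_j in which each part occurs at most \<alpha> times, and M is the sum of
   the b^j-fold copies of the M_j; conversely, every family (M_j) of such partitions of numbers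
   N_j with \<Sum>j b^j N_j = n reassembles into a partition of n.  Since b is odd,
   size M = \<Sum>j b^j size M_j has the parity of \<Sum>j size M_j, so the signs multiply and the
   signed count of partitions of n factors as claimed. *)

theory Submission
  imports Defs "HOL-Library.FuncSet"
begin

section \<open>Base-b digits\<close>

lemma sum_base_digits:
  fixes b c :: nat
  assumes "b > 0" and "c < b ^ K"
  shows "(\<Sum>j<K. b ^ j * (c div b ^ j mod b)) = c"
  using assms(2)
proof (induction K arbitrary: c)
  case 0
  then show ?case by simp
next
  case (Suc K)
  have "c div b < b ^ K"
    using Suc.prems assms(1) by (simp add: div_less_iff_less_mult mult.commute)
  then have IH: "(\<Sum>j<K. b ^ j * (c div b div b ^ j mod b)) = c div b"
    by (rule Suc.IH)
  have "(\<Sum>j<Suc K. b ^ j * (c div b ^ j mod b))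
      = c mod b + b * (\<Sum>j<K. b ^ j * (c div b div b ^ j mod b))"
    unfolding sum.lessThan_Suc_shift by (simp add: sum_distrib_left div_mult2_eq mult.assoc)
  then show ?case using IH by simp
qed

lemma base_digit_of_sum:
  fixes b :: nat
  assumes "\<forall>j<K. d j < b" and "i < K"
  shows "(\<Sum>j<K. b ^ j * d j) div b ^ i mod b = d i"
  using assms
proof (induction K arbitrary: d i)
  case 0
  then show ?case by simp
next
  case (Suc K)
  have split: "(\<Sum>j<Suc K. b ^ j * d j) = d 0 + b * (\<Sum>j<K. b ^ j * d (Suc j))"
    unfolding sum.lessThan_Suc_shift by (simp add: sum_distrib_left mult.assoc)
  show ?case
  proof (cases i)
    case 0
    then show ?thesis using split Suc.prems by simp
  next
    case (Suc i')
    have "b > 0" using Suc.prems(1) by (metis gr_zeroI not_less0 zero_less_Suc)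
    then have "(d 0 + b * (\<Sum>j<K. b ^ j * d (Suc j))) div b = (\<Sum>j<K. b ^ j * d (Suc j))"
      using Suc.prems(1) by simp
    then have "(\<Sum>j<Suc K. b ^ j * d j) div b ^ i = (\<Sum>j<K. b ^ j * d (Suc j)) div b ^ i'"
      using split Suc by (simp add: div_mult2_eq)
    then show ?thesis using Suc.IH[of "\<lambda>j. d (Suc j)" i'] Suc.prems Suc by simp
  qed
qed

section \<open>Partitions and their signed counts\<close>

definition partitions :: "nat set \<Rightarrow> nat \<Rightarrow> nat multiset set" where
  "partitions A n = {M. set_mset M \<subseteq> A \<and> sum_mset M = n}"

definition bounded_partitions :: "nat set \<Rightarrow> nat \<Rightarrow> nat \<Rightarrow> nat multiset set" where
  "bounded_partitions A \<alpha> n = {M \<in> partitions A n. \<forall>k. count M k \<le> \<alpha>}"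

lemma size_le_sum_mset: "0 \<notin># M \<Longrightarrow> size M \<le> sum_mset (M :: nat multiset)"
  by (induction M) auto

lemma count_le_sum_mset:
  assumes "0 \<notin># M"
  shows "count M x \<le> sum_mset (M :: nat multiset)"
  using count_le_size[of M x] size_le_sum_mset[OF assms] by linarith

lemma partitions_0:
  assumes "0 \<notin> A"
  shows "partitions A 0 = {{#}}"
proof -
  have "M = {#}" if "set_mset M \<subseteq> A" "sum_mset M = 0" for M
    using size_le_sum_mset[of M] that assms by auto
  then show ?thesis by (auto simp: partitions_def)
qed

lemma finite_partitions:
  assumes "0 \<notin> A"
  shows "finite (partitions A n)"
proof -
  let ?F = "{f. \<forall>x. (x \<in> {..n} \<longrightarrow> f x \<in> {..n}) \<and> (x \<notin> {..n} \<longrightarrow> f x = 0)}"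
  have "count ` partitions A n \<subseteq> ?F"
  proof (rule image_subsetI)
    fix M assume M: "M \<in> partitions A n"
    then have "0 \<notin># M" using assms by (auto simp: partitions_def)
    then have "count M x \<le> n" for x
      using M count_le_sum_mset[of M x] by (simp add: partitions_def)
    moreover have "count M x = 0" if "n < x" for x
    proof (rule ccontr)
      assume "count M x \<noteq> 0"
      then have "x \<in># M" by (simp add: count_inI)
      then have "x \<le> sum_mset M" using sum_mset.remove[of x M] by linarith
      then show False using M that by (simp add: partitions_def)
    qed
    ultimately show "count M \<in> ?F" by (simp add: not_le)
  qed
  then have "finite (count ` partitions A n)"
    by (rule finite_subset) (rule finite_set_of_finite_funs; simp)
  then show ?thesis
    by (rule finite_imageD) (simp add: inj_on_def multiset_eq_iff)
qed

lemma finite_bounded_partitions: "0 \<notin> A \<Longrightarrow> finite (bounded_partitions A \<alpha> n)"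
  unfolding bounded_partitions_def using finite_partitions by simp

lemma sum_neg_one_power_card:
  assumes "finite P"
  shows "(\<Sum>x\<in>P. (-1::int) ^ f x) = int (card {x\<in>P. even (f x)}) - int (card {x\<in>P. odd (f x)})"
proof -
  have "(\<Sum>x\<in>P. (-1::int) ^ f x) = (\<Sum>x\<in>P. if even (f x) then 1 else -1)"
    by (rule sum.cong) auto
  also have "\<dots> = (\<Sum>x\<in>P \<inter> {x. even (f x)}. 1) + (\<Sum>x\<in>P \<inter> - {x. even (f x)}. -1)"
    by (rule sum.If_cases[OF assms])
  also have "P \<inter> {x. even (f x)} = {x\<in>P. even (f x)}" by auto
  also have "P \<inter> - {x. even (f x)} = {x\<in>P. odd (f x)}" by auto
  finally show ?thesis by simp
qed

lemma pbar_eq_signed_sum: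
  assumes "0 \<notin> A"
  shows "pbar A n = (\<Sum>M\<in>partitions A n. (-1) ^ size M)"
proof (cases "n = 0")
  case True
  then show ?thesis by (simp add: pbar_def partitions_0[OF assms])
next
  case False
  have "E_part A n = card {M \<in> partitions A n. even (size M)}"
    "O_part A n = card {M \<in> partitions A n. odd (size M)}"
    unfolding E_part_def O_part_def partitions_def by (rule arg_cong[where f = card]; auto)+
  then show ?thesis
    using False sum_neg_one_power_card[OF finite_partitions[OF assms], of size n]
    by (simp add: pbar_def)
qed

lemma pbar_bd_eq_signed_sum:
  assumes "0 \<notin> A"
  shows "pbar_bd A \<alpha> n = (\<Sum>M\<in>bounded_partitions A \<alpha> n. (-1) ^ size M)"
proof (cases "n = 0")
  case True
  then have "bounded_partitions A \<alpha> n = {{#}}"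
    using partitions_0[OF assms] by (auto simp: bounded_partitions_def)
  then show ?thesis using True by (simp add: pbar_bd_def)
next
  case False
  have "E_part_bd A \<alpha> n = card {M \<in> bounded_partitions A \<alpha> n. even (size M)}"
    "O_part_bd A \<alpha> n = card {M \<in> bounded_partitions A \<alpha> n. odd (size M)}"
    unfolding E_part_bd_def O_part_bd_def bounded_partitions_def partitions_def
    by (rule arg_cong[where f = card]; auto)+
  then show ?thesis
    using False sum_neg_one_power_card[OF finite_bounded_partitions[OF assms], of size \<alpha> n]
    by (simp add: pbar_bd_def)
qed

definition mset_digit :: "nat \<Rightarrow> nat \<Rightarrow> 'a multiset \<Rightarrow> 'a multiset" where
  "mset_digit b j M = (\<Sum>x\<in>set_mset M. replicate_mset (count M x div b ^ j mod b) x)"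

definition mset_of_digits :: "nat \<Rightarrow> nat \<Rightarrow> (nat \<Rightarrow> 'a multiset) \<Rightarrow> 'a multiset" where
  "mset_of_digits b K Ms = (\<Sum>j<K. repeat_mset (b ^ j) (Ms j))"

lemma count_mset_digit: "count (mset_digit b j M) x = count M x div b ^ j mod b"
proof -
  have "count (mset_digit b j M) x
      = (\<Sum>y\<in>set_mset M. if x = y then count M y div b ^ j mod b else 0)"
    unfolding mset_digit_def count_sum by (simp add: count_replicate_mset)
  also have "\<dots> = count M x div b ^ j mod b"
    by (simp add: sum.delta not_in_iff)
  finally show ?thesis .
qed

lemma count_mset_of_digits: "count (mset_of_digits b K Ms) x = (\<Sum>j<K. b ^ j * count (Ms j) x)"
  unfolding mset_of_digits_def by (simp add: count_sum)

lemma set_mset_mset_of_digits: "set_mset (mset_of_digits b K Ms) \<subseteq> (\<Union>j<K. set_mset (Ms j))"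
proof
  fix x assume "x \<in># mset_of_digits b K Ms"
  then have "(\<Sum>j<K. b ^ j * count (Ms j) x) \<noteq> 0"
    by (metis count_eq_zero_iff count_mset_of_digits)
  then obtain j where "j < K" "count (Ms j) x \<noteq> 0"
    by (metis (no_types, lifting) lessThan_iff mult_0_right sum.neutral)
  then show "x \<in> (\<Union>j<K. set_mset (Ms j))" by (auto simp: count_inI)
qed

lemma sum_mset_repeat_mset: "sum_mset (repeat_mset k M) = of_nat k * sum_mset (M :: 'a :: semiring_1 multiset)"
  by (induction k) (simp_all add: distrib_right)

lemma sum_mset_mset_of_digits:
  "sum_mset (mset_of_digits b K Ms) = (\<Sum>j<K. b ^ j * sum_mset (Ms j :: nat multiset))"
  unfolding mset_of_digits_def by (induction K) (simp_all add: sum_mset_repeat_mset)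

lemma size_mset_of_digits: "size (mset_of_digits b K Ms) = (\<Sum>j<K. b ^ j * size (Ms j))"
  unfolding mset_of_digits_def by (induction K) simp_all

lemma neg_one_power_size_mset_of_digits:
  assumes "odd b"
  shows "(-1::int) ^ size (mset_of_digits b K Ms) = (\<Prod>j<K. (-1) ^ size (Ms j))"
proof -
  have "(-1::int) ^ (b ^ j * m) = (-1) ^ m" for j m
    using assms by (simp add: minus_one_power_iff)
  then show ?thesis
    unfolding size_mset_of_digits power_sum by simp
qed

lemma count_mset_digit_less: "b > 0 \<Longrightarrow> count (mset_digit b j M) x < b"
  by (simp add: count_mset_digit)

lemma set_mset_mset_digit: "set_mset (mset_digit b j M) \<subseteq> set_mset M"
proof
  fix x assume "x \<in># mset_digit b j M"
  then have "0 < count (mset_digit b j M) x" by simp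
  then have "0 < count M x"
    by (cases "count M x = 0") (simp_all add: count_mset_digit)
  then show "x \<in># M" by simp
qed

lemma mset_digit_mset_of_digits:
  assumes "\<forall>j<K. \<forall>x. count (Ms j) x < b" and "i < K"
  shows "mset_digit b i (mset_of_digits b K Ms) = Ms i"
proof (rule multiset_eqI)
  fix x
  have "(\<Sum>j<K. b ^ j * count (Ms j) x) div b ^ i mod b = count (Ms i) x"
    by (rule base_digit_of_sum) (use assms in auto)
  then show "count (mset_digit b i (mset_of_digits b K Ms)) x = count (Ms i) x"
    by (simp only: count_mset_digit count_mset_of_digits)
qed

lemma mset_of_digits_mset_digit:
  assumes "b > 0" and "\<forall>x. count M x < b ^ K"
  shows "mset_of_digits b K (\<lambda>j. mset_digit b j M) = M"
proof (rule multiset_eqI)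
  fix x
  show "count (mset_of_digits b K (\<lambda>j. mset_digit b j M)) x = count M x"
    unfolding count_mset_of_digits count_mset_digit by (rule sum_base_digits) (use assms in auto)
qed

lemma mset_of_digits_cong:
  "(\<And>j. j < K \<Longrightarrow> Ms j = Ms' j) \<Longrightarrow> mset_of_digits b K Ms = mset_of_digits b K Ms'"
  unfolding mset_of_digits_def by (rule sum.cong) auto

definition radix_sequences :: "nat \<Rightarrow> nat \<Rightarrow> nat \<Rightarrow> (nat \<Rightarrow> nat) set" where
  "radix_sequences b K n = {N. (\<forall>j\<ge>K. N j = 0) \<and> (\<Sum>j<K. b ^ j * N j) = n}"

lemma Sum_any_eq_sum_lessThan:
  fixes f :: "nat \<Rightarrow> 'a :: comm_monoid_add"
  assumes "\<And>j. K \<le> j \<Longrightarrow> f j = 0"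
  shows "Sum_any f = (\<Sum>j<K. f j)"
  by (rule Sum_any.expand_superset) (use assms in \<open>auto simp: not_less[symmetric]\<close>)

lemma Prod_any_eq_prod_lessThan:
  fixes f :: "nat \<Rightarrow> 'a :: comm_monoid_mult"
  assumes "\<And>j. K \<le> j \<Longrightarrow> f j = 1"
  shows "Prod_any f = (\<Prod>j<K. f j)"
  by (rule Prod_any.expand_superset) (use assms in \<open>auto simp: not_less[symmetric]\<close>)

lemma radix_sequences_eq:
  assumes "b > 0" and "n < b ^ K"
  shows "{N. finite {i. N i \<noteq> 0} \<and> n = Sum_any (\<lambda>i. b ^ i * N i)} = radix_sequences b K n"
proof (intro equalityI subsetI)
  fix N assume "N \<in> {N. finite {i. N i \<noteq> 0} \<and> n = Sum_any (\<lambda>i. b ^ i * N i)}"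
  then have fin: "finite {i. N i \<noteq> 0}" and n: "n = Sum_any (\<lambda>i. b ^ i * N i)"
    by auto
  have "N j = 0" if "K \<le> j" for j
  proof (rule ccontr)
    assume "N j \<noteq> 0"
    have "n = (\<Sum>i\<in>insert j {i. N i \<noteq> 0}. b ^ i * N i)"
      unfolding n by (rule Sum_any.expand_superset) (use fin in auto)
    then have "b ^ j * N j \<le> n"
      using member_le_sum[of j "insert j {i. N i \<noteq> 0}" "\<lambda>i. b ^ i * N i"] fin by simp
    moreover have "b ^ K \<le> b ^ j * N j"
      using \<open>N j \<noteq> 0\<close> power_increasing[OF that, of b] assms(1) by (simp add: le_trans)
    ultimately show False using assms(2) by linarith
  qed
  moreover have "Sum_any (\<lambda>i. b ^ i * N i) = (\<Sum>i<K. b ^ i * N i)"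
    by (rule Sum_any_eq_sum_lessThan) (simp add: calculation)
  ultimately show "N \<in> radix_sequences b K n"
    using n by (simp add: radix_sequences_def)
next
  fix N assume "N \<in> radix_sequences b K n"
  then have N: "\<forall>j\<ge>K. N j = 0" "(\<Sum>j<K. b ^ j * N j) = n"
    by (auto simp: radix_sequences_def)
  then have "{i. N i \<noteq> 0} \<subseteq> {..<K}"
    by (auto simp: not_less[symmetric])
  then have "finite {i. N i \<noteq> 0}"
    by (rule finite_subset) simp
  moreover have "n = Sum_any (\<lambda>i. b ^ i * N i)"
    using N(2) by (subst Sum_any_eq_sum_lessThan[of K]) (simp_all add: N(1))
  ultimately show "N \<in> {N. finite {i. N i \<noteq> 0} \<and> n = Sum_any (\<lambda>i. b ^ i * N i)}"
    by simp
qed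

lemma finite_radix_sequences:
  assumes "b > 0"
  shows "finite (radix_sequences b K n)"
proof -
  have "N \<in> {N. \<forall>j. (j \<in> {..<K} \<longrightarrow> N j \<in> {..n}) \<and> (j \<notin> {..<K} \<longrightarrow> N j = 0)}"
    if N: "N \<in> radix_sequences b K n" for N
  proof -
    have "N j \<le> n" if "j < K" for j
    proof -
      have "N j \<le> b ^ j * N j" using assms by simp
      also have "\<dots> \<le> (\<Sum>i<K. b ^ i * N i)"
        using that by (intro member_le_sum) auto
      finally show ?thesis using N by (simp add: radix_sequences_def)
    qed
    then show ?thesis using N by (simp add: radix_sequences_def)
  qed
  then have "radix_sequences b K n
      \<subseteq> {N. \<forall>j. (j \<in> {..<K} \<longrightarrow> N j \<in> {..n}) \<and> (j \<notin> {..<K} \<longrightarrow> N j = 0)}"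
    by blast
  then show ?thesis
    by (rule finite_subset) (rule finite_set_of_finite_funs; simp)
qed

section \<open>Splitting a partition into its base-(\<alpha>+1) digits\<close>

lemma bij_betw_mset_of_digits:
  assumes "0 \<notin> A" and "n < Suc \<alpha> ^ K"
  shows "bij_betw (\<lambda>(N, Ms). mset_of_digits (Suc \<alpha>) K Ms)
    (SIGMA N:radix_sequences (Suc \<alpha>) K n. Pi\<^sub>E {..<K} (\<lambda>j. bounded_partitions A \<alpha> (N j)))
    (partitions A n)"
proof -
  define b where "b = Suc \<alpha>"
  define digits where
    "digits M = (\<lambda>j. if j < K then sum_mset (mset_digit b j M) else 0,
                 restrict (\<lambda>j. mset_digit b j M) {..<K})" for M :: "nat multiset"
  let ?S = "SIGMA N:radix_sequences b K n. Pi\<^sub>E {..<K} (\<lambda>j. bounded_partitions A \<alpha> (N j))"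
  have b: "b > 0" by (simp add: b_def)
  have digits_of_digits: "mset_of_digits b K (\<lambda>j. mset_digit b j M) = M"
    if "M \<in> partitions A n" for M
  proof (rule mset_of_digits_mset_digit[OF b], intro allI)
    fix x
    have "0 \<notin># M" using that assms(1) by (auto simp: partitions_def)
    then have "count M x \<le> n" using that count_le_sum_mset by (auto simp: partitions_def)
    then show "count M x < b ^ K" using assms(2) by (simp add: b_def)
  qed
  have to_partition: "mset_of_digits b K Ms \<in> partitions A n \<and> digits (mset_of_digits b K Ms) = (N, Ms)"
    if "(N, Ms) \<in> ?S" for N Ms
  proof -
    have N: "N \<in> radix_sequences b K n"
      and Ms: "Ms \<in> Pi\<^sub>E {..<K} (\<lambda>j. bounded_partitions A \<alpha> (N j))"
      using that by auto
    have Msj: "set_mset (Ms j) \<subseteq> A \<and> sum_mset (Ms j) = N j \<and> (\<forall>x. count (Ms j) x < b)"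
      if "j < K" for j
      using Ms that by (auto simp: bounded_partitions_def partitions_def b_def less_Suc_eq_le)
    have digit: "mset_digit b j (mset_of_digits b K Ms) = Ms j" if "j < K" for j
      by (rule mset_digit_mset_of_digits) (use Msj that in auto)
    have "digits (mset_of_digits b K Ms) = (N, Ms)"
      using Msj digit N Ms
      by (auto simp: digits_def radix_sequences_def fun_eq_iff PiE_def extensional_def not_less)
    moreover have "set_mset (mset_of_digits b K Ms) \<subseteq> A"
      using set_mset_mset_of_digits[of b K Ms] Msj by blast
    then have "mset_of_digits b K Ms \<in> partitions A n"
      using Msj N by (simp add: partitions_def sum_mset_mset_of_digits radix_sequences_def)
    ultimately show ?thesis by simp
  qed
  have from_partition: "digits M \<in> ?S \<and> mset_of_digits b K (snd (digits M)) = M"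
    if M: "M \<in> partitions A n" for M
  proof -
    have "mset_of_digits b K (snd (digits M)) = M"
      using digits_of_digits[OF M] mset_of_digits_cong[of K "restrict (\<lambda>j. mset_digit b j M) {..<K}"]
      by (simp add: digits_def)
    moreover have "(\<Sum>j<K. b ^ j * sum_mset (mset_digit b j M)) = n"
      using digits_of_digits[OF M] M by (simp add: partitions_def flip: sum_mset_mset_of_digits)
    then have "fst (digits M) \<in> radix_sequences b K n"
      by (simp add: digits_def radix_sequences_def)
    moreover have "mset_digit b j M \<in> bounded_partitions A \<alpha> (fst (digits M) j)" if "j < K" for j
      using that M set_mset_mset_digit[of b j M] count_mset_digit_less[OF b, of j M]
      by (auto simp: digits_def bounded_partitions_def partitions_def b_def less_Suc_eq_le)
    ultimately show ?thesis
      by (auto simp: digits_def)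
  qed
  show ?thesis
    unfolding b_def[symmetric]
  proof (rule bij_betw_byWitness[where f' = digits])
    show "\<forall>p\<in>?S. digits (case p of (N, Ms) \<Rightarrow> mset_of_digits b K Ms) = p"
      using to_partition by auto
    show "(\<lambda>(N, Ms). mset_of_digits b K Ms) ` ?S \<subseteq> partitions A n"
      using to_partition by auto
    show "\<forall>M\<in>partitions A n. (case digits M of (N, Ms) \<Rightarrow> mset_of_digits b K Ms) = M"
      using from_partition by (simp add: split_def)
    show "digits ` partitions A n \<subseteq> ?S"
      using from_partition by blast
  qed
qed

lemma pbar_eq_sum_radix_products:
  assumes "0 \<notin> A" and "\<alpha> > 0" and "even \<alpha>"
  shows "pbar A n =
    (\<Sum>N \<in> {N :: nat \<Rightarrow> nat. finite {i. N i \<noteq> 0}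
                 \<and> n = Sum_any (\<lambda>i. (\<alpha> + 1) ^ i * N i)}.
       Prod_any (\<lambda>j. pbar_bd A \<alpha> (N j)))"
proof -
  define b where "b = Suc \<alpha>"
  let ?S = "radix_sequences b n n"
  let ?P = "\<lambda>N. Pi\<^sub>E {..<n} (\<lambda>j. bounded_partitions A \<alpha> (N j))"
  let ?sg = "\<lambda>M :: nat multiset. (-1 :: int) ^ size M"
  have "n < 2 ^ n" by (rule less_exp)
  also have "\<dots> \<le> b ^ n" using assms(2) by (simp add: b_def power_mono)
  finally have n_less: "n < b ^ n" .
  have "(\<Sum>N\<in>?S. Prod_any (\<lambda>j. pbar_bd A \<alpha> (N j)))
      = (\<Sum>N\<in>?S. \<Prod>j<n. \<Sum>M\<in>bounded_partitions A \<alpha> (N j). ?sg M)"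
  proof (rule sum.cong[OF refl])
    fix N assume "N \<in> ?S"
    then have "Prod_any (\<lambda>j. pbar_bd A \<alpha> (N j)) = (\<Prod>j<n. pbar_bd A \<alpha> (N j))"
      by (intro Prod_any_eq_prod_lessThan) (simp add: radix_sequences_def pbar_bd_def)
    then show "Prod_any (\<lambda>j. pbar_bd A \<alpha> (N j))
        = (\<Prod>j<n. \<Sum>M\<in>bounded_partitions A \<alpha> (N j). ?sg M)"
      by (simp add: pbar_bd_eq_signed_sum[OF assms(1)])
  qed
  also have "\<dots> = (\<Sum>N\<in>?S. \<Sum>Ms\<in>?P N. \<Prod>j<n. ?sg (Ms j))"
    by (simp add: prod_sum_PiE finite_bounded_partitions[OF assms(1)])
  also have "\<dots> = (\<Sum>(N, Ms)\<in>Sigma ?S ?P. \<Prod>j<n. ?sg (Ms j))"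
    by (rule sum.Sigma) (auto simp: b_def finite_radix_sequences finite_bounded_partitions[OF assms(1)]
        intro!: finite_PiE)
  also have "\<dots> = (\<Sum>(N, Ms)\<in>Sigma ?S ?P. ?sg (mset_of_digits b n Ms))"
    using assms(3) by (simp add: b_def neg_one_power_size_mset_of_digits)
  also have "\<dots> = (\<Sum>M\<in>partitions A n. ?sg M)"
    using sum.reindex_bij_betw[OF bij_betw_mset_of_digits[OF assms(1), of n \<alpha> n], of ?sg] n_less
    by (simp add: b_def split_def)
  also have "\<dots> = pbar A n"
    by (simp add: pbar_eq_signed_sum[OF assms(1)])
  finally show ?thesis
    using radix_sequences_eq[of b n n] n_less by (simp add: b_def)
qed

theorem mainTheorem5:
  fixes \<psi> :: "nat \<Rightarrow> nat" and A :: "nat set" and \<alpha> :: nat and n :: nat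
  assumes "inj_on \<psi> {1..}"
    and "\<forall>k\<ge>1. \<psi> k \<ge> 1"
    and "A = \<psi> ` {1..}"
    and "\<alpha> > 0" and "even \<alpha>"
  shows "pbar A n =
    (\<Sum>N \<in> {N :: nat \<Rightarrow> nat. finite {i. N i \<noteq> 0}
                 \<and> n = Sum_any (\<lambda>i. (\<alpha> + 1) ^ i * N i)}.
       Prod_any (\<lambda>j. pbar_bd A \<alpha> (N j)))"
proof -
  \<comment> \<open>Only positivity of the parts matters.\<close>
  have "0 \<notin> A" using assms(2,3) by force
  then show ?thesis using assms(4,5) by (rule pbar_eq_sum_radix_products)
qed

end
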